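(* Let $f:\mathbb{N}\to\mathbb{N}$ be an arbitrary non-decreasing function and let $d$ be a positive integer. There exist integers $k_0$ and $n_0$ such that if $T$ is a rooted tree of depth at most $d$ with at least $n_0$ leaves, then for some $k\le k_0$ there exists a vertex $v$ of $T$ that has at least $f(k)$ children, such that the subtree of $T$ rooted at each child of $v$ has at most $k$ leaves. *)

theory Defs
  imports Main
begin

datatype rtree = Node (children: "rtree list")

fun leaves :: "rtree \<Rightarrow> nat" where
  "leaves (Node ts) = (if ts = [] then 1 else sum_list (map leaves ts))"

fun depth :: "rtree \<Rightarrow> nat" where
  "depth (Node ts) = (if ts = [] then 0 else Suc (Max (set (map depth ts))))"

text \<open>The vertices of a tree, each represented by the subtree rooted at it.\<close>
fun vertices :: "rtree \<Rightarrow> rtree set" where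
  "vertices (Node ts) = insert (Node ts) (\<Union>t\<in>set ts. vertices t)"

end

theory Submission
  imports Defs
begin

text \<open>Call \<open>v\<close> \<open>k\<close>-heavy if it witnesses the conclusion for \<open>k\<close>. Without heavy vertices, a tree
  of depth at most \<open>h\<close> has at most \<open>B h\<close> leaves, where \<open>B 0 = 1\<close> and
  \<open>B (h + 1) = B h * (f (B h) + 1)\<close>: the subtrees at the children of the root have at most
  \<open>B h\<close> leaves each, so, the root not being \<open>B h\<close>-heavy, there are fewer than \<open>f (B h)\<close> of
  them. Hence \<open>k\<^sub>0 = B d\<close> and \<open>n\<^sub>0 = B d + 1\<close> work.\<close>

definition heavy_vertex :: "(nat \<Rightarrow> nat) \<Rightarrow> nat \<Rightarrow> rtree \<Rightarrow> bool" where
  "heavy_vertex f k v \<longleftrightarrow> f k \<le> length (children v) \<and> (\<forall>c\<in>set (children v). leaves c \<le> k)"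

fun leaf_bound :: "(nat \<Rightarrow> nat) \<Rightarrow> nat \<Rightarrow> nat" where
  "leaf_bound f 0 = 1"
| "leaf_bound f (Suc h) = leaf_bound f h * (f (leaf_bound f h) + 1)"

lemma leaf_bound_pos: "1 \<le> leaf_bound f h"
  by (induction h) auto

lemma leaf_bound_le_Suc: "leaf_bound f h \<le> leaf_bound f (Suc h)"
  by simp

lemma depth_child_le:
  assumes "t \<in> set ts" and "depth (Node ts) \<le> Suc h"
  shows "depth t \<le> h"
proof -
  have "depth t \<le> Max (set (map depth ts))"
    using assms(1) by simp
  with assms show ?thesis
    by (auto split: if_splits)
qed

lemma vertices_child_subset: "t \<in> set ts \<Longrightarrow> vertices t \<subseteq> vertices (Node ts)"
  by auto

lemma leaves_le_leaf_bound_if_no_heavy_vertex: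
  assumes "depth T \<le> h" and "leaf_bound f h \<le> K"
    and "\<And>k v. 1 \<le> k \<Longrightarrow> k \<le> K \<Longrightarrow> v \<in> vertices T \<Longrightarrow> \<not> heavy_vertex f k v"
  shows "leaves T \<le> leaf_bound f h"
  using assms
proof (induction T arbitrary: h)
  case (Node ts)
  show ?case
  proof (cases "ts = []")
    case True
    then show ?thesis using leaf_bound_pos[of f h] by simp
  next
    case False
    then obtain h' where h: "h = Suc h'"
      using Node.prems(1) by (cases h) auto
    have K: "leaf_bound f h' \<le> K"
      using leaf_bound_le_Suc[of f h'] Node.prems(2) unfolding h by (rule order_trans)
    have children_bound: "leaves t \<le> leaf_bound f h'" if t: "t \<in> set ts" for t
    proof (rule Node.IH[OF t])
      show "depth t \<le> h'" using depth_child_le[OF t] Node.prems(1) h by simp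
      show "\<And>k v. 1 \<le> k \<Longrightarrow> k \<le> K \<Longrightarrow> v \<in> vertices t \<Longrightarrow> \<not> heavy_vertex f k v"
        using Node.prems(3) vertices_child_subset[OF t] by blast
    qed (use K in simp)
    have "\<not> heavy_vertex f (leaf_bound f h') (Node ts)"
      using Node.prems(3) K leaf_bound_pos[of f h'] by simp
    then have few_children: "length ts \<le> f (leaf_bound f h')"
      using children_bound by (auto simp: heavy_vertex_def)
    have "leaves (Node ts) = (\<Sum>t\<leftarrow>ts. leaves t)"
      using False by simp
    also have "\<dots> \<le> (\<Sum>t\<leftarrow>ts. leaf_bound f h')"
      using children_bound by (rule sum_list_mono)
    also have "\<dots> = length ts * leaf_bound f h'"
      by (simp add: sum_list_triv)
    also have "\<dots> \<le> f (leaf_bound f h') * leaf_bound f h'"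
      using few_children by (rule mult_right_mono) simp
    also have "\<dots> \<le> leaf_bound f h"
      unfolding h by simp
    finally show ?thesis .
  qed
qed

theorem lemma3p8:
  fixes f :: "nat \<Rightarrow> nat" and d :: nat
  assumes "mono f" and "0 < d"
  shows "\<exists>k0 n0 :: nat. \<forall>T. depth T \<le> d \<and> n0 \<le> leaves T \<longrightarrow>
           (\<exists>k. 1 \<le> k \<and> k \<le> k0 \<and> (\<exists>v\<in>vertices T.
              f k \<le> length (children v) \<and> (\<forall>c\<in>set (children v). leaves c \<le> k)))"
proof (rule exI[of _ "leaf_bound f d"], rule exI[of _ "Suc (leaf_bound f d)"], intro allI impI)
  fix T assume T: "depth T \<le> d \<and> Suc (leaf_bound f d) \<le> leaves T"
  show "\<exists>k. 1 \<le> k \<and> k \<le> leaf_bound f d \<and> (\<exists>v\<in>vertices T.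
          f k \<le> length (children v) \<and> (\<forall>c\<in>set (children v). leaves c \<le> k))"
  proof (rule ccontr)
    assume "\<not> ?thesis"
    then have "leaves T \<le> leaf_bound f d"
      using T by (intro leaves_le_leaf_bound_if_no_heavy_vertex) (auto simp: heavy_vertex_def)
    with T show False by simp
  qed
qed

end
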